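(* For $\alpha\in[-1,1]$ let $\rho(\alpha)=\tfrac12(I+\alpha\sigma_z)=\mathrm{diag}\big(\tfrac{1+\alpha}{2},\tfrac{1-\alpha}{2}\big)$. For all $\alpha,\beta\in[-1,1]$, with $z_-=\min(\alpha,\beta)$, $z_+=\max(\alpha,\beta)$, the matrix $$\Pi(\alpha,\beta)=\frac12\begin{pmatrix}1+z_- & 0&0&\sqrt{(1+z_-)(1-z_+)}\\ 0&\max(\beta-\alpha,0)&0&0\\0&0&\max(\alpha-\beta,0)&0\\ \sqrt{(1+z_-)(1-z_+)}&0&0&1-z_+\end{pmatrix}$$ is an optimal coupling of $\rho(\alpha)$ and $\rho(\beta)$ for the cost $C_{\mathrm{symm},p}$, and $$D^p_{\mathrm{symm},p}(\rho(\alpha),\rho(\beta))=2^p\Big(1+\tfrac12|\alpha-\beta|-\sqrt{(1+\min(\alpha,\beta))(1-\max(\alpha,\beta))}\Big).$$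
   Context: Qubit setting: $\mathcal{H}=\mathbb{C}^2$, $\mathcal{H}^*$ is identified with $\mathbb{C}^2$ via the dual basis, and $A^T$ is the usual matrix transpose; operators on $\mathcal{H}\otimes\mathcal{H}^*$ are $4\times4$ matrices in the basis $e_1\otimes e_1^*,e_1\otimes e_2^*,e_2\otimes e_1^*,e_2\otimes e_2^*$. Pauli matrices: $\sigma_1=\sigma_x=\begin{pmatrix}0&1\\1&0\end{pmatrix}$, $\sigma_2=\sigma_y=\begin{pmatrix}0&-i\\i&0\end{pmatrix}$, $\sigma_3=\sigma_z=\begin{pmatrix}1&0\\0&-1\end{pmatrix}$. The set of couplings of states $\rho,\omega$ is $\mathcal{C}(\rho,\omega)=\{\Pi\in\mathcal{S}(\mathcal{H}\otimes\mathcal{H}^* ):\mathrm{tr}_{\mathcal{H}^*}[\Pi]=\omega,\ \mathrm{tr}_{\mathcal{H}}[\Pi]=\rho^T\}$. For $p\ge1$, $C_{\mathrm{symm},p}=\sum_{k=1}^3|\sigma_k\otimes I^T-I\otimes\sigma_k^T|^p$, which equals the matrix $\begin{pmatrix}2^p&0&0&-2^p\\0&2^{p+1}&0&0\\0&0&2^{p+1}&0\\-2^p&0&0&2^p\end{pmatrix}$, and $D_{\mathrm{symm},p}(\rho,\omega)=\big(\min_{\Pi\in\mathcal{C}(\rho,\omega)}\mathrm{tr}[\Pi C_{\mathrm{symm},p}]\big)^{1/p}$. *)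

theory Defs
  imports "HOL-Analysis.Analysis"
begin

text \<open>Matrices are functions nat => nat => complex; only entries with indices
  below the dimension are relevant. Operators on H (x) H* are 4x4 matrices,
  basis index of e_i (x) e_j^* (i,j in {0,1}) is 2*i+j.\<close>

type_synonym cmat = "nat \<Rightarrow> nat \<Rightarrow> complex"

definition mat_of_list :: "complex list list \<Rightarrow> cmat" where
  "mat_of_list xs i j = xs ! i ! j"

definition is_state :: "nat \<Rightarrow> cmat \<Rightarrow> bool" where
  "is_state n A \<longleftrightarrow>
     (\<forall>i<n. \<forall>j<n. A j i = cnj (A i j)) \<and>
     (\<forall>v :: nat \<Rightarrow> complex. 0 \<le> Re (\<Sum>i<n. \<Sum>j<n. cnj (v i) * A i j * v j)) \<and>
     (\<Sum>i<n. A i i) = 1"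

definition transp2 :: "cmat \<Rightarrow> cmat" where
  "transp2 A i j = A j i"

definition ptrace_Hstar :: "cmat \<Rightarrow> cmat" where
  "ptrace_Hstar P i k = (\<Sum>j<2. P (2*i+j) (2*k+j))"

definition ptrace_H :: "cmat \<Rightarrow> cmat" where
  "ptrace_H P j l = (\<Sum>i<2. P (2*i+j) (2*i+l))"

definition mat_eq :: "nat \<Rightarrow> cmat \<Rightarrow> cmat \<Rightarrow> bool" where
  "mat_eq n A B \<longleftrightarrow> (\<forall>i<n. \<forall>j<n. A i j = B i j)"

definition couplings :: "cmat \<Rightarrow> cmat \<Rightarrow> cmat set" where
  "couplings \<rho> \<omega> = {P. is_state 4 P \<and> mat_eq 2 (ptrace_Hstar P) \<omega>
                                   \<and> mat_eq 2 (ptrace_H P) (transp2 \<rho>)}"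

definition C_symm :: "real \<Rightarrow> cmat" where
  "C_symm p = mat_of_list
     [[of_real (2 powr p), 0, 0, - of_real (2 powr p)],
      [0, of_real (2 powr (p+1)), 0, 0],
      [0, 0, of_real (2 powr (p+1)), 0],
      [- of_real (2 powr p), 0, 0, of_real (2 powr p)]]"

text \<open>tr[P C] (real for Hermitian P, C).\<close>
definition cost :: "cmat \<Rightarrow> cmat \<Rightarrow> real" where
  "cost P C = Re (\<Sum>i<4. \<Sum>j<4. P i j * C j i)"

definition D_symm :: "real \<Rightarrow> cmat \<Rightarrow> cmat \<Rightarrow> real" where
  "D_symm p \<rho> \<omega> = (Inf ((\<lambda>P. cost P (C_symm p)) ` couplings \<rho> \<omega>)) powr (1 / p)"

definition rho_z :: "real \<Rightarrow> cmat" where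
  "rho_z a = mat_of_list [[of_real ((1 + a) / 2), 0], [0, of_real ((1 - a) / 2)]]"

definition Pi_opt :: "real \<Rightarrow> real \<Rightarrow> cmat" where
  "Pi_opt a b = (let zm = min a b; zp = max a b; s = sqrt ((1 + zm) * (1 - zp)) in
     mat_of_list
       [[of_real ((1 + zm) / 2), 0, 0, of_real (s / 2)],
        [0, of_real (max (b - a) 0 / 2), 0, 0],
        [0, 0, of_real (max (a - b) 0 / 2), 0],
        [of_real (s / 2), 0, 0, of_real ((1 - zp) / 2)]])"

end

theory Submission
  imports Defs
begin

(* Writing u, v, w, t for the diagonal of a coupling P and r = Re P_03, the marginal constraints
   give u + v + w + t = 1 and v - w = (b - a)/2, so the cost is 2^p (1 + (v + w) - 2r).
   Positivity of P bounds r by sqrt (u t), the marginals bound u by (1 + z_-)/2 and t by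
   (1 - z_+)/2, and nonnegativity of v, w gives v + w >= |a - b|/2.  The X-shaped matrix Pi_opt
   attains all three bounds at once, and its positivity reduces to that of its outer 2x2 block. *)

lemma sum_lessThan_2: "(\<Sum>i<(2::nat). f i) = f 0 + f 1"
  by (simp add: eval_nat_numeral)

lemma sum_lessThan_4: "(\<Sum>i<(4::nat). f i) = f 0 + f 1 + f 2 + f 3"
  by (simp add: eval_nat_numeral)

lemma all_lessThan_2: "(\<forall>i<(2::nat). P i) \<longleftrightarrow> P 0 \<and> P 1"
  by (auto simp: eval_nat_numeral less_Suc_eq)

lemma all_lessThan_4: "(\<forall>i<(4::nat). P i) \<longleftrightarrow> P 0 \<and> P 1 \<and> P 2 \<and> P 3"
  by (auto simp: eval_nat_numeral less_Suc_eq)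

lemma quadratic_form_nonneg_imp_le_sqrt:
  fixes u t r :: real
  assumes "0 \<le> u" "0 \<le> t" and form: "\<And>c d. 0 \<le> c\<^sup>2 * u + d\<^sup>2 * t - 2 * c * d * r"
  shows "r \<le> sqrt (u * t)"
proof (cases "r \<le> 0")
  case True
  then show ?thesis using assms(1,2) by (meson order.trans real_sqrt_ge_zero mult_nonneg_nonneg)
next
  case False
  have "r\<^sup>2 \<le> u * t"
  proof (cases "u = 0")
    case True
    \<comment> \<open>with u = 0 the form is affine in c with slope -2r < 0\<close>
    have "0 \<le> ((t + 1) / (2 * r))\<^sup>2 * u + 1\<^sup>2 * t - 2 * ((t + 1) / (2 * r)) * 1 * r"
      by (rule form)
    also have "\<dots> = -1"
      using True False by (simp add: field_simps)
    finally show ?thesis by simp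
  next
    case False
    have "0 \<le> r\<^sup>2 * u + u\<^sup>2 * t - 2 * r * u * r"
      by (rule form)
    then have "0 \<le> u * (u * t - r\<^sup>2)"
      by (simp add: algebra_simps power2_eq_square)
    then show ?thesis
      using False assms(1) by (simp add: zero_le_mult_iff)
  qed
  then show ?thesis by (rule real_le_rsqrt)
qed

lemma is_state_hermitian:
  assumes "is_state n P" "i < n" "j < n"
  shows "P j i = cnj (P i j)"
  using assms unfolding is_state_def by blast

lemma is_state_psd:
  assumes "is_state n P"
  shows "0 \<le> Re (\<Sum>i<n. \<Sum>j<n. cnj (v i) * P i j * v j)"
  using assms unfolding is_state_def by blast

lemma is_state_diag_nonneg:
  assumes "is_state n P" "k < n"
  shows "0 \<le> Re (P k k)"
proof -
  have "0 \<le> Re (\<Sum>i<n. \<Sum>j<n. cnj (of_bool (i = k)) * P i j * of_bool (j = k))"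
    by (rule is_state_psd[OF assms(1)])
  also have "\<dots> = Re (P k k)"
    using assms(2)
    by (simp add: of_bool_def if_distrib[of "\<lambda>x. _ * x"] if_distrib[of "\<lambda>x. x * _"]
        if_distrib[of cnj] cong: if_cong)
  finally show ?thesis .
qed

lemma is_state_two_point_form_nonneg:
  assumes "is_state n P" "i < n" "j < n" "i \<noteq> j"
  shows "0 \<le> c\<^sup>2 * Re (P i i) + d\<^sup>2 * Re (P j j) - 2 * c * d * Re (P i j)"
proof -
  define v :: "nat \<Rightarrow> complex"
    where "v k = (if k = i then of_real c else if k = j then - of_real d else 0)" for k
  have restrict: "(\<Sum>k<n. f k) = f i + f j" if "\<And>k. k \<noteq> i \<Longrightarrow> k \<noteq> j \<Longrightarrow> f k = 0" for f
  proof -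
    have "(\<Sum>k<n. f k) = sum f {i, j}"
      by (rule sum.mono_neutral_right) (use assms(2,3) that in auto)
    then show ?thesis using assms(4) by simp
  qed
  have "0 \<le> Re (\<Sum>k<n. \<Sum>l<n. cnj (v k) * P k l * v l)"
    by (rule is_state_psd[OF assms(1)])
  also have "\<dots> = c\<^sup>2 * Re (P i i) + d\<^sup>2 * Re (P j j) - c * d * Re (P i j + P j i)"
    using assms(4) by (simp add: restrict v_def) (simp add: v_def power2_eq_square algebra_simps)
  also have "Re (P i j + P j i) = 2 * Re (P i j)"
    using is_state_hermitian[OF assms(1-3)] by simp
  finally show ?thesis by simp
qed

lemma is_state_Re_le_sqrt_diag:
  assumes "is_state n P" "i < n" "j < n"
  shows "Re (P i j) \<le> sqrt (Re (P i i) * Re (P j j))"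
proof (cases "i = j")
  case True
  then show ?thesis
    using is_state_diag_nonneg[OF assms(1,2)] by simp
next
  case False
  show ?thesis
    using is_state_diag_nonneg[OF assms(1)] is_state_two_point_form_nonneg[OF assms False] assms(2,3)
    by (intro quadratic_form_nonneg_imp_le_sqrt) auto
qed

definition X_mat :: "real \<Rightarrow> real \<Rightarrow> real \<Rightarrow> real \<Rightarrow> real \<Rightarrow> cmat" where
  "X_mat x w1 w2 y h = mat_of_list
     [[of_real x, 0, 0, of_real h],
      [0, of_real w1, 0, 0],
      [0, 0, of_real w2, 0],
      [of_real h, 0, 0, of_real y]]"

lemma X_mat_quadratic_form_nonneg:
  fixes x y h A B C D :: real
  assumes "0 \<le> x" "0 \<le> y" "h\<^sup>2 \<le> x * y"
  shows "0 \<le> x * (A\<^sup>2 + B\<^sup>2) + y * (C\<^sup>2 + D\<^sup>2) + 2 * h * (A * C + B * D)"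
proof (cases "x = 0")
  case True
  then have "h = 0" using assms(3) by simp
  then show ?thesis using True assms(2) by simp
next
  case False
  have "x * (x * (A\<^sup>2 + B\<^sup>2) + y * (C\<^sup>2 + D\<^sup>2) + 2 * h * (A * C + B * D))
      = (x * A + h * C)\<^sup>2 + (x * B + h * D)\<^sup>2 + (x * y - h\<^sup>2) * (C\<^sup>2 + D\<^sup>2)"
    by (simp add: power2_eq_square algebra_simps)
  also have "\<dots> \<ge> 0"
    using assms(3) by simp
  finally show ?thesis
    using False assms(1) by (simp add: zero_le_mult_iff)
qed

lemma is_state_X_mat:
  assumes "0 \<le> x" "0 \<le> w1" "0 \<le> w2" "0 \<le> y" "h\<^sup>2 \<le> x * y" "x + w1 + w2 + y = 1"
  shows "is_state 4 (X_mat x w1 w2 y h)"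
  unfolding is_state_def
proof (intro conjI)
  show "\<forall>i<4. \<forall>j<4. X_mat x w1 w2 y h j i = cnj (X_mat x w1 w2 y h i j)"
    by (simp add: X_mat_def mat_of_list_def all_lessThan_4)
  show "\<forall>v. 0 \<le> Re (\<Sum>i<4. \<Sum>j<4. cnj (v i) * X_mat x w1 w2 y h i j * v j)"
  proof
    fix v :: "nat \<Rightarrow> complex"
    have "0 \<le> x * ((Re (v 0))\<^sup>2 + (Im (v 0))\<^sup>2) + y * ((Re (v 3))\<^sup>2 + (Im (v 3))\<^sup>2)
        + 2 * h * (Re (v 0) * Re (v 3) + Im (v 0) * Im (v 3))"
      using assms(1,4,5) by (rule X_mat_quadratic_form_nonneg)
    moreover have "0 \<le> w1 * ((Re (v 1))\<^sup>2 + (Im (v 1))\<^sup>2) + w2 * ((Re (v 2))\<^sup>2 + (Im (v 2))\<^sup>2)"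
      using assms(2,3) by simp
    ultimately show "0 \<le> Re (\<Sum>i<4. \<Sum>j<4. cnj (v i) * X_mat x w1 w2 y h i j * v j)"
      by (simp add: X_mat_def mat_of_list_def sum_lessThan_4) (simp add: power2_eq_square algebra_simps)
  qed
  show "(\<Sum>i<4. X_mat x w1 w2 y h i i) = 1"
    using assms(6) by (simp add: X_mat_def mat_of_list_def sum_lessThan_4 complex_eq_iff)
qed

lemma X_mat_in_couplings_rho_z:
  assumes "0 \<le> x" "0 \<le> w1" "0 \<le> w2" "0 \<le> y" "h\<^sup>2 \<le> x * y"
    and "x + w1 = (1 + b) / 2" "w2 + y = (1 - b) / 2" "x + w2 = (1 + a) / 2" "w1 + y = (1 - a) / 2"
  shows "X_mat x w1 w2 y h \<in> couplings (rho_z a) (rho_z b)"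
proof -
  have "x + w1 + w2 + y = 1"
    using assms(6,7) by simp
  then show ?thesis
    using is_state_X_mat[OF assms(1-5)] assms(6-9)
    by (simp add: couplings_def mat_eq_def all_lessThan_2 ptrace_Hstar_def ptrace_H_def transp2_def
        sum_lessThan_2 X_mat_def rho_z_def mat_of_list_def complex_eq_iff)
qed

lemma cost_C_symm:
  "cost P (C_symm p) = 2 powr p * (Re (P 0 0) + Re (P 3 3) - Re (P 0 3) - Re (P 3 0))
     + 2 * 2 powr p * (Re (P 1 1) + Re (P 2 2))"
  by (simp add: cost_def C_symm_def mat_of_list_def sum_lessThan_4 powr_add algebra_simps)

lemma cost_C_symm_state:
  assumes "is_state 4 P"
  shows "cost P (C_symm p)
    = 2 powr p * (Re (P 0 0) + Re (P 3 3) - 2 * Re (P 0 3) + 2 * (Re (P 1 1) + Re (P 2 2)))"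
  using is_state_hermitian[OF assms, of 0 3] by (simp add: cost_C_symm algebra_simps)

lemma cost_X_mat:
  "cost (X_mat x w1 w2 y h) (C_symm p) = 2 powr p * (x + y - 2 * h + 2 * (w1 + w2))"
  by (simp add: cost_C_symm X_mat_def mat_of_list_def algebra_simps)

lemma coupling_rho_z_diag:
  assumes "P \<in> couplings (rho_z a) (rho_z b)"
  shows "Re (P 0 0) + Re (P 1 1) = (1 + b) / 2" "Re (P 2 2) + Re (P 3 3) = (1 - b) / 2"
    "Re (P 0 0) + Re (P 2 2) = (1 + a) / 2" "Re (P 1 1) + Re (P 3 3) = (1 - a) / 2"
  using assms
  unfolding couplings_def mat_eq_def all_lessThan_2 ptrace_Hstar_def ptrace_H_def transp2_def
    sum_lessThan_2 rho_z_def mat_of_list_def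
  by (simp_all add: complex_eq_iff)

lemma transport_cost_lower_bound:
  fixes u v w t r a b :: real
  assumes "0 \<le> u" "0 \<le> v" "0 \<le> w" "0 \<le> t" "r \<le> sqrt (u * t)"
    and "u + v = (1 + b) / 2" "w + t = (1 - b) / 2" "u + w = (1 + a) / 2" "v + t = (1 - a) / 2"
  shows "1 + \<bar>a - b\<bar> / 2 - sqrt ((1 + min a b) * (1 - max a b)) \<le> u + t - 2 * r + 2 * (v + w)"
proof -
  have "2 * u \<le> 1 + min a b" "2 * t \<le> 1 - max a b"
    using assms(2-4,6-9) by (simp_all add: min_def max_def)
  then have "(2 * u) * (2 * t) \<le> (1 + min a b) * (1 - max a b)"
    using assms(1,4) by (intro mult_mono) simp_all
  then have "2 * sqrt (u * t) \<le> sqrt ((1 + min a b) * (1 - max a b))"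
    using real_sqrt_le_mono by (fastforce simp: real_sqrt_mult)
  moreover have "\<bar>a - b\<bar> / 2 \<le> v + w"
    using assms(2,3,6,8) by (auto simp: abs_if)
  moreover have "u + t = 1 - (v + w)"
    using assms(6,7) by simp
  ultimately show ?thesis
    using assms(5) by (smt (verit))
qed

lemma Pi_opt_eq_X_mat:
  "Pi_opt a b = X_mat ((1 + min a b) / 2) (max (b - a) 0 / 2) (max (a - b) 0 / 2) ((1 - max a b) / 2)
     (sqrt ((1 + min a b) * (1 - max a b)) / 2)"
  by (simp add: Pi_opt_def X_mat_def Let_def)

lemma Pi_opt_in_couplings:
  assumes "a \<in> {-1..1}" "b \<in> {-1..1}"
  shows "Pi_opt a b \<in> couplings (rho_z a) (rho_z b)"
proof -
  have "0 \<le> (1 + min a b) * (1 - max a b)"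
    using assms by (intro mult_nonneg_nonneg) auto
  then have "(sqrt ((1 + min a b) * (1 - max a b)) / 2)\<^sup>2 = (1 + min a b) / 2 * ((1 - max a b) / 2)"
    by (simp add: power_divide)
  then show ?thesis
    unfolding Pi_opt_eq_X_mat using assms
    by (intro X_mat_in_couplings_rho_z) (auto simp: min_def max_def field_simps)
qed

lemma cost_Pi_opt:
  "cost (Pi_opt a b) (C_symm p) = 2 powr p * (1 + \<bar>a - b\<bar> / 2 - sqrt ((1 + min a b) * (1 - max a b)))"
  by (simp add: Pi_opt_eq_X_mat cost_X_mat min_def max_def abs_if field_simps)

lemma cost_Pi_opt_le_coupling:
  assumes "P \<in> couplings (rho_z a) (rho_z b)"
  shows "cost (Pi_opt a b) (C_symm p) \<le> cost P (C_symm p)"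
proof -
  have P: "is_state 4 P"
    using assms by (simp add: couplings_def)
  have "1 + \<bar>a - b\<bar> / 2 - sqrt ((1 + min a b) * (1 - max a b))
      \<le> Re (P 0 0) + Re (P 3 3) - 2 * Re (P 0 3) + 2 * (Re (P 1 1) + Re (P 2 2))"
    using is_state_diag_nonneg[OF P] is_state_Re_le_sqrt_diag[OF P, of 0 3] coupling_rho_z_diag[OF assms]
    by (intro transport_cost_lower_bound) auto
  then show ?thesis
    by (simp add: cost_Pi_opt cost_C_symm_state[OF P])
qed

theorem proposition3p1:
  fixes a b p :: real
  assumes "a \<in> {-1..1}" and "b \<in> {-1..1}" and "1 \<le> p"
  shows "Pi_opt a b \<in> couplings (rho_z a) (rho_z b)
    \<and> (\<forall>P \<in> couplings (rho_z a) (rho_z b). cost (Pi_opt a b) (C_symm p) \<le> cost P (C_symm p))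
    \<and> D_symm p (rho_z a) (rho_z b) powr p
        = 2 powr p * (1 + \<bar>a - b\<bar> / 2 - sqrt ((1 + min a b) * (1 - max a b)))"
proof (intro conjI ballI)
  show coupling: "Pi_opt a b \<in> couplings (rho_z a) (rho_z b)"
    using assms(1,2) by (rule Pi_opt_in_couplings)
  show optimal: "cost (Pi_opt a b) (C_symm p) \<le> cost P (C_symm p)"
    if "P \<in> couplings (rho_z a) (rho_z b)" for P
    using that by (rule cost_Pi_opt_le_coupling)
  have inf: "Inf ((\<lambda>P. cost P (C_symm p)) ` couplings (rho_z a) (rho_z b)) = cost (Pi_opt a b) (C_symm p)"
    using coupling optimal by (intro cInf_eq_minimum) auto
  have "sqrt ((1 + min a b) * (1 - max a b)) \<le> ((1 + min a b) + (1 - max a b)) / 2"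
    using assms(1,2) by (intro arith_geo_mean_sqrt) auto
  also have "\<dots> = 1 - \<bar>a - b\<bar> / 2"
    by (simp add: min_def max_def abs_if field_simps)
  also have "\<dots> \<le> 1 + \<bar>a - b\<bar> / 2"
    by simp
  finally have "0 \<le> cost (Pi_opt a b) (C_symm p)"
    by (simp add: cost_Pi_opt)
  then show "D_symm p (rho_z a) (rho_z b) powr p
      = 2 powr p * (1 + \<bar>a - b\<bar> / 2 - sqrt ((1 + min a b) * (1 - max a b)))"
    using assms(3) by (simp add: D_symm_def inf powr_powr cost_Pi_opt)
qed

end
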